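(* Consider the click-through auction setting with two bidders with equal values $v_1=v_2=v\ge 0$, and let $0\le l<h\le 1$. Suppose the CTR vector equals $(l,h)$ with probability $1/2$ and $(h,l)$ with probability $1/2$. Then for every $\varepsilon>0$ there is a calibrated, correlated information structure (with finitely many signals) whose revenue is at least $vh-\varepsilon$.
   Context: Setting. Bidder $i$ has known value per click $v_i$. The CTR vector $r=(r_1,r_2)\in[0,1]^2$ is drawn from a prior $G$ with finite support. An information structure is a probability distribution with finite support on pairs $(r,s)\in[0,1]^2\times[0,1]^2$ whose $r$-marginal is $G$. Given signals $s$, the winner $i^*$ maximizes $v_is_i$ (uniform tie-breaking), pays per click $p_{i^*}=\max_{j\ne i^*}v_js_j/s_{i^*}$ (revenue $0$ if $s_{i^*}=0$), only upon a click, which occurs with probability $r_{i^*}$; revenue is $\mathbb{E}[r_{i^*}p_{i^*}]$. Calibrated: $\mathbb{E}[r_i\mid s_i=t]=t$ for every $i$ and every $t$ with $\Pr[s_i=t]>0$. Correlated: not independent, where independent means $\mathbb{E}[r_i\mid s]=\mathbb{E}[r_i\mid s_i]$ for all $i$ and all $s$ in the support. *)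

theory Defs
  imports "HOL-Probability.Probability"
begin

text \<open>Points of an information structure: pairs (r, s) of a CTR vector r = (r1, r2)
  and a signal vector s = (s1, s2). Bidders are indexed by 1 and 2.\<close>

type_synonym point = "(real \<times> real) \<times> (real \<times> real)"

definition comp :: "nat \<Rightarrow> real \<times> real \<Rightarrow> real" where
  "comp i x = (if i = 1 then fst x else snd x)"

definition ctr :: "nat \<Rightarrow> point \<Rightarrow> real" where
  "ctr i x = comp i (fst x)"

definition sig :: "nat \<Rightarrow> point \<Rightarrow> real" where
  "sig i x = comp i (snd x)"

definition sym_prior :: "real \<Rightarrow> real \<Rightarrow> (real \<times> real) pmf" where
  "sym_prior l h = map_pmf (\<lambda>b. if b then (l, h) else (h, l)) (bernoulli_pmf (1/2))"

definition info_structure :: "(real \<times> real) pmf \<Rightarrow> point pmf \<Rightarrow> bool" where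
  "info_structure G I \<longleftrightarrow> finite (set_pmf I) \<and> map_pmf fst I = G \<and>
     (\<forall>x\<in>set_pmf I. \<forall>i\<in>{1,2::nat}. ctr i x \<in> {0..1} \<and> sig i x \<in> {0..1})"

definition calibrated :: "point pmf \<Rightarrow> bool" where
  "calibrated I \<longleftrightarrow> (\<forall>i\<in>{1,2::nat}. \<forall>t.
     measure_pmf.prob I {x. sig i x = t} > 0 \<longrightarrow>
     measure_pmf.expectation (cond_pmf I {x. sig i x = t}) (ctr i) = t)"

definition independent_is :: "point pmf \<Rightarrow> bool" where
  "independent_is I \<longleftrightarrow> (\<forall>i\<in>{1,2::nat}. \<forall>x\<in>set_pmf I.
     measure_pmf.expectation (cond_pmf I {y. snd y = snd x}) (ctr i) =
     measure_pmf.expectation (cond_pmf I {y. sig i y = sig i x}) (ctr i))"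

definition correlated :: "point pmf \<Rightarrow> bool" where
  "correlated I \<longleftrightarrow> \<not> independent_is I"

text \<open>Expected revenue collected from the winner i (0 if its signal is 0):
  click probability r_i times per-click price v_j s_j / s_i.\<close>
definition win_rev :: "real \<Rightarrow> real \<Rightarrow> nat \<Rightarrow> point \<Rightarrow> real" where
  "win_rev v1 v2 i x =
     (let j = (if i = 1 then 2 else 1) :: nat;
          vj = (if j = 1 then v1 else v2)
      in if sig i x = 0 then 0 else ctr i x * (vj * sig j x / sig i x))"

definition point_rev :: "real \<Rightarrow> real \<Rightarrow> point \<Rightarrow> real" where
  "point_rev v1 v2 x =
     (if v1 * sig 1 x > v2 * sig 2 x then win_rev v1 v2 1 x
      else if v1 * sig 1 x < v2 * sig 2 x then win_rev v1 v2 2 x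
      else (win_rev v1 v2 1 x + win_rev v1 v2 2 x) / 2)"

definition revenue :: "real \<Rightarrow> real \<Rightarrow> point pmf \<Rightarrow> real" where
  "revenue v1 v2 I = measure_pmf.expectation I (point_rev v1 v2)"

end

theory Submission
  imports Defs
begin

text \<open>Place the grid \<open>a(j) = l + (h - l) j / (n + 1)\<close>, \<open>j = 0, \<dots>, n + 1\<close>, on \<open>[l, h]\<close>
  and draw \<open>k\<close> from \<open>Binomial(n, 1/2)\<close> independently of the state; the bidder whose CTR is
  \<open>l\<close> is shown \<open>a(k)\<close> and the bidder whose CTR is \<open>h\<close> is shown \<open>a(k + 1)\<close>.
  A bidder seeing \<open>a(j)\<close> has CTR \<open>l\<close> with weight \<open>P(k = j)\<close> and CTR \<open>h\<close> with weight
  \<open>P(k = j - 1)\<close>, and the binomial ratio \<open>P(k = j) / P(k = j - 1) = (n + 1 - j) / j\<close> is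
  exactly \<open>(h - a(j)) / (a(j) - l)\<close>, so every signal is calibrated.  The high-CTR bidder
  always wins and pays \<open>v a(k) / a(k + 1) \<ge> v k / (k + 1)\<close> per click, hence the revenue is at
  least \<open>v h (1 - E[1 / (k + 1)]) \<ge> v h - 2 v / (n + 1)\<close>.  The structure is correlated because
  the pair of signals reveals the state while a single signal does not.\<close>

lemma expectation_cond_pmf:
  fixes p :: "'a pmf" and g :: "'a \<Rightarrow> real"
  assumes fin: "finite (set_pmf p)" and A: "set_pmf p \<inter> A \<noteq> {}"
  shows "measure_pmf.expectation (cond_pmf p A) g =
         measure_pmf.expectation p (\<lambda>x. indicator A x * g x) / measure_pmf.prob p A"
proof -
  have "measure_pmf.expectation (cond_pmf p A) g = (\<Sum>x\<in>set_pmf p. g x * pmf (cond_pmf p A) x)"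
    using fin A by (intro integral_measure_pmf_real) auto
  also have "\<dots> = (\<Sum>x\<in>set_pmf p. indicator A x * g x * pmf p x) / measure_pmf.prob p A"
    by (simp add: pmf_cond[OF A] sum_divide_distrib) (intro sum.cong refl, simp)
  also have "(\<Sum>x\<in>set_pmf p. indicator A x * g x * pmf p x) = measure_pmf.expectation p (\<lambda>x. indicator A x * g x)"
    using fin by (intro integral_measure_pmf_real[symmetric]) auto
  finally show ?thesis .
qed

lemma expectation_cond_pmf_eqI:
  fixes p :: "'a pmf" and g :: "'a \<Rightarrow> real"
  assumes fin: "finite (set_pmf p)" and pos: "measure_pmf.prob p A > 0"
    and balance: "measure_pmf.expectation p (\<lambda>x. indicator A x * (g x - t)) = 0"
  shows "measure_pmf.expectation (cond_pmf p A) g = t"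
proof -
  have A: "set_pmf p \<inter> A \<noteq> {}"
    using pos measure_Int_set_pmf[of p A] by (auto simp: Int_commute)
  have int: "integrable p f" for f :: "'a \<Rightarrow> real"
    using fin by (rule integrable_measure_pmf_finite)
  have "measure_pmf.expectation p (\<lambda>x. indicator A x * g x) - t * measure_pmf.prob p A = 0"
    using balance by (simp add: right_diff_distrib Bochner_Integration.integral_diff[OF int int] mult.commute)
  then show ?thesis
    using pos by (simp add: expectation_cond_pmf[OF fin A])
qed

lemma pmf_binomial_half: "pmf (binomial_pmf n (1/2)) k = real (n choose k) / 2 ^ n"
proof (cases "k \<le> n")
  case True
  then have "(1/2::real) ^ k * (1/2) ^ (n - k) = (1/2) ^ n"
    by (simp flip: power_add)
  then show ?thesis
    by (simp add: power_one_over)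
next
  case False
  then show ?thesis by (simp add: binomial_eq_0)
qed

lemma pmf_binomial_half_Suc:
  "pmf (binomial_pmf n (1/2)) (Suc k) * real (Suc k) = pmf (binomial_pmf n (1/2)) k * real (n - k)"
proof -
  have "real (n choose Suc k) * real (Suc k) = real (n choose k) * real (n - k)"
    using binomial_absorption[of k n] binomial_absorb_comp[of n k]
    by (metis mult.commute of_nat_mult)
  then show ?thesis
    unfolding pmf_binomial_half by (simp add: field_simps del: pmf_binomial)
qed

lemma sum_pmf_binomial_half_div_Suc:
  "(\<Sum>k\<le>n. pmf (binomial_pmf n (1/2)) k / (real k + 1)) \<le> 2 / (real n + 1)"
proof -
  have summand: "pmf (binomial_pmf n (1/2)) k / (real k + 1) = real (Suc n choose Suc k) / (2 ^ n * (real n + 1))" for k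
  proof -
    have "(real k + 1) * real (Suc n choose Suc k) = (real n + 1) * real (n choose k)"
      using Suc_times_binomial[of k n] by (metis add.commute of_nat_Suc of_nat_mult)
    then show ?thesis
      unfolding pmf_binomial_half divide_divide_eq_left
      by (subst frac_eq_eq) (simp_all add: ac_simps add_pos_pos del: binomial_Suc_Suc)
  qed
  have "(\<Sum>k\<le>n. Suc n choose Suc k) \<le> 2 ^ Suc n"
    using choose_row_sum[of "Suc n"] sum.atMost_Suc_shift[of "\<lambda>k. Suc n choose k" n] by simp
  then have "real (\<Sum>k\<le>n. Suc n choose Suc k) \<le> 2 ^ Suc n"
    by (metis of_nat_le_iff of_nat_numeral of_nat_power)
  then have "real (\<Sum>k\<le>n. Suc n choose Suc k) / (2 ^ n * (real n + 1)) \<le> 2 ^ Suc n / (2 ^ n * (real n + 1))"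
    by (intro divide_right_mono) simp_all
  then show ?thesis
    by (simp only: summand of_nat_sum flip: sum_divide_distrib) simp
qed

definition grid :: "real \<Rightarrow> real \<Rightarrow> nat \<Rightarrow> nat \<Rightarrow> real" where
  "grid l h n k = l + (h - l) * real k / real (n + 1)"

definition grid_point :: "real \<Rightarrow> real \<Rightarrow> nat \<Rightarrow> bool \<Rightarrow> nat \<Rightarrow> point" where
  "grid_point l h n b k =
     (if b then ((l, h), (grid l h n k, grid l h n (Suc k)))
      else ((h, l), (grid l h n (Suc k), grid l h n k)))"

definition grid_structure :: "real \<Rightarrow> real \<Rightarrow> nat \<Rightarrow> point pmf" where
  "grid_structure l h n =
     map_pmf (\<lambda>(b, k). grid_point l h n b k) (pair_pmf (bernoulli_pmf (1/2)) (binomial_pmf n (1/2)))"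

lemma grid_eq_iff: "l < h \<Longrightarrow> grid l h n i = grid l h n j \<longleftrightarrow> i = j"
  by (simp add: grid_def)

lemma grid_bounds:
  assumes "0 \<le> l" "l < h" "h \<le> 1" "j \<le> Suc n"
  shows "0 \<le> grid l h n j" "grid l h n j \<le> 1"
proof -
  have "real j / (real n + 1) \<le> 1"
    using assms(4) by (simp add: divide_simps)
  then have "(h - l) * (real j / (real n + 1)) \<le> h - l"
    using assms(2) by (intro mult_left_le) simp_all
  moreover have "0 \<le> (h - l) * (real j / (real n + 1))"
    using assms(2) by simp
  moreover have "grid l h n j = l + (h - l) * (real j / (real n + 1))"
    by (simp add: grid_def)
  ultimately show "0 \<le> grid l h n j" "grid l h n j \<le> 1"
    using assms(1,3) by linarith+
qed

lemma set_pmf_grid_structure: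
  "set_pmf (grid_structure l h n) = (\<lambda>(b, k). grid_point l h n b k) ` (UNIV \<times> {..n})"
  by (simp add: grid_structure_def)

lemma finite_set_pmf_grid_structure: "finite (set_pmf (grid_structure l h n))"
  by (simp add: set_pmf_grid_structure)

lemma expectation_grid_structure:
  "measure_pmf.expectation (grid_structure l h n) g =
     (\<Sum>k\<le>n. pmf (binomial_pmf n (1/2)) k * (g (grid_point l h n True k) + g (grid_point l h n False k))) / 2"
proof -
  let ?p = "pair_pmf (bernoulli_pmf (1/2)) (binomial_pmf n (1/2))"
  have "measure_pmf.expectation (grid_structure l h n) g =
        (\<Sum>(b, k)\<in>UNIV \<times> {..n}. g (grid_point l h n b k) * pmf ?p (b, k))"
    unfolding grid_structure_def integral_map_pmf
    by (subst integral_measure_pmf_real[where A = "UNIV \<times> {..n}"]) (auto simp: case_prod_beta)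
  also have "\<dots> = (\<Sum>k\<le>n. (g (grid_point l h n True k) + g (grid_point l h n False k)) *
                         (pmf (binomial_pmf n (1/2)) k / 2))"
    by (simp add: sum.cartesian_product[symmetric] UNIV_bool pmf_pair algebra_simps sum.distrib del: pmf_binomial)
  finally show ?thesis
    by (simp add: sum_divide_distrib mult.commute)
qed

lemma grid_balance:
  assumes "i \<le> n"
  shows "pmf (binomial_pmf n (1/2)) (Suc i) * (l - grid l h n (Suc i)) +
         pmf (binomial_pmf n (1/2)) i * (h - grid l h n (Suc i)) = 0"
proof -
  define c where "c = (h - l) / (real n + 1)"
  have low: "l - grid l h n (Suc i) = - c * real (Suc i)"
    by (simp add: grid_def c_def field_simps)
  have high: "h - grid l h n (Suc i) = c * real (n - i)"
    using assms by (simp add: grid_def c_def of_nat_diff field_simps)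
  show ?thesis
    unfolding low high
    using arg_cong[OF pmf_binomial_half_Suc[of n i], of "\<lambda>x. c * x"]
    by (simp only: algebra_simps)
qed

lemma grid_calibration_sum:
  assumes lh: "l < h"
  shows "(\<Sum>k\<le>n. pmf (binomial_pmf n (1/2)) k *
            (of_bool (grid l h n k = t) * (l - t) + of_bool (grid l h n (Suc k) = t) * (h - t))) = 0"
    (is "(\<Sum>k\<le>n. ?P k * ?e k) = 0")
proof (cases "\<exists>j \<le> Suc n. t = grid l h n j")
  case False
  then have "?e k = 0" if "k \<le> n" for k
  proof -
    have "grid l h n k \<noteq> t" "grid l h n (Suc k) \<noteq> t"
      using False that by (metis le_SucI, metis Suc_le_mono)
    then show ?thesis by simp
  qed
  then show ?thesis by simp
next
  case True
  then obtain j where j: "j \<le> Suc n" "t = grid l h n j" by auto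
  have "?P k * ?e k = (if k = j then ?P k * (l - t) else 0) + (if Suc k = j then ?P k * (h - t) else 0)" for k
    using grid_eq_iff[OF lh] j(2) by auto
  then have sum: "(\<Sum>k\<le>n. ?P k * ?e k) =
      (\<Sum>k\<le>n. if k = j then ?P k * (l - t) else 0) + (\<Sum>k\<le>n. if Suc k = j then ?P k * (h - t) else 0)"
    by (simp only: sum.distrib)
  show ?thesis
  proof (cases j)
    case 0
    then have "l - t = 0"
      using j(2) by (simp add: grid_def)
    then show ?thesis
      unfolding sum using 0 by simp
  next
    case (Suc i)
    then have i: "i \<le> n" using j(1) by simp
    \<comment> \<open>For \<open>i = n\<close> the index \<open>Suc i\<close> lies outside the sum, but its binomial weight vanishes.\<close>
    have low: "(\<Sum>k\<le>n. if k = j then ?P k * (l - t) else 0) = ?P (Suc i) * (l - t)"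
      using Suc by (cases "Suc i \<le> n") (simp_all add: pmf_binomial_half binomial_eq_0 del: pmf_binomial)
    have high: "(\<Sum>k\<le>n. if Suc k = j then ?P k * (h - t) else 0) = ?P i * (h - t)"
      using Suc i by simp
    show ?thesis
      unfolding sum low high using grid_balance[OF i, of l h] Suc j(2) by simp
  qed
qed

lemma calibrated_grid_structure:
  assumes "l < h"
  shows "calibrated (grid_structure l h n)"
  unfolding calibrated_def
proof (intro ballI allI impI)
  fix i :: nat and t :: real
  assume i: "i \<in> {1, 2}" and pos: "measure_pmf.prob (grid_structure l h n) {x. sig i x = t} > 0"
  have "measure_pmf.expectation (grid_structure l h n) (\<lambda>x. indicator {x. sig i x = t} x * (ctr i x - t)) =
        (\<Sum>k\<le>n. pmf (binomial_pmf n (1/2)) k *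
           (of_bool (grid l h n k = t) * (l - t) + of_bool (grid l h n (Suc k) = t) * (h - t))) / 2"
  proof -
    from i consider "i = 1" | "i = 2" by blast
    then show ?thesis
      unfolding expectation_grid_structure
      by cases (simp_all add: indicator_def grid_point_def ctr_def sig_def comp_def add.commute)
  qed
  also have "\<dots> = 0"
    using grid_calibration_sum[OF assms] by simp
  finally show "measure_pmf.expectation (cond_pmf (grid_structure l h n) {x. sig i x = t}) (ctr i) = t"
    by (rule expectation_cond_pmf_eqI[OF finite_set_pmf_grid_structure pos])
qed

lemma info_structure_grid_structure:
  assumes "0 \<le> l" "l < h" "h \<le> 1"
  shows "info_structure (sym_prior l h) (grid_structure l h n)"
proof -
  have "map_pmf fst (grid_structure l h n) =
        map_pmf (\<lambda>b. if b then (l, h) else (h, l)) (map_pmf fst (pair_pmf (bernoulli_pmf (1/2)) (binomial_pmf n (1/2))))"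
    unfolding grid_structure_def pmf.map_comp by (intro map_pmf_cong) (auto simp: grid_point_def)
  then have marginal: "map_pmf fst (grid_structure l h n) = sym_prior l h"
    by (simp only: map_fst_pair_pmf sym_prior_def)
  have "ctr i x \<in> {0..1} \<and> sig i x \<in> {0..1}"
    if x: "x \<in> set_pmf (grid_structure l h n)" and i: "i \<in> {1, 2}" for x i
  proof -
    obtain b k where x: "x = grid_point l h n b k" and k: "k \<le> n"
      using x by (auto simp: set_pmf_grid_structure)
    have "grid l h n k \<in> {0..1}" "grid l h n (Suc k) \<in> {0..1}"
      using grid_bounds[OF assms] k by simp_all
    then show ?thesis
      using i assms unfolding x by (cases b) (auto simp: grid_point_def ctr_def sig_def comp_def)
  qed
  then show ?thesis
    unfolding info_structure_def using marginal finite_set_pmf_grid_structure by blast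
qed

lemma correlated_grid_structure:
  assumes lh: "l < h" and n: "n \<ge> 1"
  shows "correlated (grid_structure l h n)"
proof -
  let ?I = "grid_structure l h n" and ?x = "grid_point l h n True 0"
  have x: "?x \<in> set_pmf ?I"
    unfolding set_pmf_grid_structure by (rule image_eqI[where x = "(True, 0)"]) auto
  have "measure_pmf.expectation ?I (\<lambda>y. indicator {y. snd y = snd ?x} y * (ctr 2 y - h)) = 0"
    unfolding expectation_grid_structure
    using grid_eq_iff[OF lh] by (simp add: grid_point_def ctr_def comp_def indicator_def)
  then have joint: "measure_pmf.expectation (cond_pmf ?I {y. snd y = snd ?x}) (ctr 2) = h"
    by (intro expectation_cond_pmf_eqI finite_set_pmf_grid_structure measure_pmf_posI[OF x]) simp_all
  have "measure_pmf.prob ?I {y. sig 2 y = sig 2 ?x} > 0"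
    by (rule measure_pmf_posI[OF x]) simp
  then have "measure_pmf.expectation (cond_pmf ?I {y. sig 2 y = sig 2 ?x}) (ctr 2) = grid l h n 1"
    using calibrated_grid_structure[OF lh] unfolding calibrated_def
    by (simp add: grid_point_def sig_def comp_def)
  moreover have "grid l h n 1 < h"
    using lh n by (simp add: grid_def field_simps)
  ultimately have neq: "measure_pmf.expectation (cond_pmf ?I {y. snd y = snd ?x}) (ctr 2) \<noteq>
                       measure_pmf.expectation (cond_pmf ?I {y. sig 2 y = sig 2 ?x}) (ctr 2)"
    using joint by simp
  show ?thesis
    unfolding correlated_def independent_is_def
  proof
    assume "\<forall>i\<in>{1, 2::nat}. \<forall>x\<in>set_pmf ?I.
      measure_pmf.expectation (cond_pmf ?I {y. snd y = snd x}) (ctr i) =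
      measure_pmf.expectation (cond_pmf ?I {y. sig i y = sig i x}) (ctr i)"
    then have "\<forall>x\<in>set_pmf ?I.
      measure_pmf.expectation (cond_pmf ?I {y. snd y = snd x}) (ctr 2) =
      measure_pmf.expectation (cond_pmf ?I {y. sig 2 y = sig 2 x}) (ctr 2)"
      by simp
    with x neq show False by blast
  qed
qed

lemma point_rev_grid_point_ge:
  assumes v: "v \<ge> 0" and l: "0 \<le> l" and lh: "l < h"
  shows "v * h * (real k / (real k + 1)) \<le> point_rev v v (grid_point l h n b k)"
proof -
  define d where "d = (h - l) / (real n + 1)"
  define s t where "s = grid l h n k" and "t = grid l h n (Suc k)"
  have d: "d > 0" using lh by (simp add: d_def)
  have s: "s = l + d * real k"
    by (simp add: s_def grid_def d_def)
  have t: "t = s + d"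
    unfolding t_def s_def grid_def d_def by (simp add: distrib_left add_divide_distrib)
  have "s \<ge> 0" "t > 0" "s < t"
    using d l by (simp_all add: s t add_nonneg_pos)
  have "real k * t \<le> s * (real k + 1)"
    using l by (simp add: s t algebra_simps)
  then have "real k / (real k + 1) \<le> s / t"
    using \<open>t > 0\<close> by (simp add: divide_simps mult.commute)
  moreover have "point_rev v v (grid_point l h n b k) = v * h * (s / t)"
  proof (cases "v = 0")
    case False
    then have "v * s < v * t" using v \<open>s < t\<close> by simp
    then show ?thesis
      using \<open>t > 0\<close> by (cases b) (auto simp: point_rev_def win_rev_def grid_point_def ctr_def sig_def comp_def s_def t_def)
  qed (simp add: point_rev_def win_rev_def)
  moreover have "v * h \<ge> 0" using v l lh by simp
  ultimately show ?thesis
    by (metis mult_left_mono)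
qed

lemma revenue_grid_structure_ge:
  assumes v: "v \<ge> 0" and l: "0 \<le> l" and lh: "l < h" and h: "h \<le> 1"
  shows "v * h - 2 * v / (real n + 1) \<le> revenue v v (grid_structure l h n)"
proof -
  let ?P = "pmf (binomial_pmf n (1/2))"
  let ?r = "\<lambda>b k. point_rev v v (grid_point l h n b k)"
  have total: "(\<Sum>k\<le>n. ?P k) = 1"
    by (rule sum_pmf_eq_1) auto
  have summand: "?P k * (v * h * (real k / (real k + 1))) = v * h * (?P k - ?P k / (real k + 1))" for k
  proof -
    have "real k + 1 \<noteq> 0" by linarith
    then show ?thesis by (simp add: field_simps del: pmf_binomial)
  qed
  have "v * h * (1 - 2 / (real n + 1)) \<le> v * h * (1 - (\<Sum>k\<le>n. ?P k / (real k + 1)))"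
    using sum_pmf_binomial_half_div_Suc[of n] v l lh by (intro mult_left_mono) simp_all
  also have "\<dots> = (\<Sum>k\<le>n. ?P k * (v * h * (real k / (real k + 1))))"
    by (simp only: summand sum_distrib_left[symmetric] sum_subtractf total)
  also have "\<dots> \<le> (\<Sum>k\<le>n. ?P k * (?r True k + ?r False k) / 2)"
  proof (rule sum_mono)
    fix k
    have "v * h * (real k / (real k + 1)) \<le> (?r True k + ?r False k) / 2"
      using point_rev_grid_point_ge[OF v l lh, of k n True] point_rev_grid_point_ge[OF v l lh, of k n False]
      by (simp add: field_simps)
    then show "?P k * (v * h * (real k / (real k + 1))) \<le> ?P k * (?r True k + ?r False k) / 2"
      by (simp only: times_divide_eq_right[symmetric] mult_left_mono pmf_nonneg)
  qed
  also have "\<dots> = revenue v v (grid_structure l h n)"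
    by (simp only: revenue_def expectation_grid_structure sum_divide_distrib)
  finally have "v * h * (1 - 2 / (real n + 1)) \<le> revenue v v (grid_structure l h n)" .
  moreover have "v * h * (2 / (real n + 1)) \<le> v * (2 / (real n + 1))"
    using v h by (intro mult_right_mono mult_left_le) simp_all
  ultimately show ?thesis
    by (simp add: algebra_simps)
qed

theorem mainTheorem4:
  fixes v l h :: real
  assumes "v \<ge> 0" and "0 \<le> l" and "l < h" and "h \<le> 1"
  shows "\<forall>\<epsilon>>0. \<exists>I. info_structure (sym_prior l h) I \<and> calibrated I \<and> correlated I \<and>
           revenue v v I \<ge> v * h - \<epsilon>"
proof (intro allI impI)
  fix \<epsilon> :: real
  assume "\<epsilon> > 0"
  obtain m :: nat where "2 * v / \<epsilon> < real m"
    using reals_Archimedean2 by blast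
  then have "2 * v < \<epsilon> * real m"
    using \<open>\<epsilon> > 0\<close> by (simp add: divide_simps mult.commute)
  also have "\<dots> \<le> \<epsilon> * (real (Suc m) + 1)"
    using \<open>\<epsilon> > 0\<close> by (intro mult_left_mono) simp_all
  finally have "2 * v / (real (Suc m) + 1) \<le> \<epsilon>"
    by (simp add: divide_simps mult.commute)
  then have "v * h - \<epsilon> \<le> revenue v v (grid_structure l h (Suc m))"
    using revenue_grid_structure_ge[OF assms, of "Suc m"] by linarith
  with assms show "\<exists>I. info_structure (sym_prior l h) I \<and> calibrated I \<and> correlated I \<and>
               revenue v v I \<ge> v * h - \<epsilon>"
    by (intro exI[of _ "grid_structure l h (Suc m)"] conjI info_structure_grid_structure
        calibrated_grid_structure correlated_grid_structure) simp_all
qed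
end
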